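(* Let $(X,\mu)$ be a non-atomic probability measure space, $\mathcal{T}$ a tree on $X$, $\mathcal{M}=\mathcal{M}_{\mathcal{T}}$ the associated maximal operator, and $p>1$. For $0<f\le F$ let $$B(f,F)=\sup\Big\{\|\mathcal{M}\phi\|_{p,\infty} : \phi\ge0,\ \int_X\phi\,d\mu=f,\ |||\phi|||_{p,\infty}=F\Big\}.$$ Then $B(f,F)=F$.
   Context: A tree on $(X,\mu)$ is a set $\mathcal{T}$ of measurable subsets of $X$ such that: (i) $X\in\mathcal{T}$ and $\mu(I)>0$ for every $I\in\mathcal{T}$; (ii) every $I\in\mathcal{T}$ has an associated finite subset $\mathcal{C}(I)\subseteq\mathcal{T}$ with at least two elements, whose elements are pairwise almost disjoint (i.e. intersections have measure zero) subsets of $I$ with union $I$; (iii) $\mathcal{T}=\bigcup_{m\ge0}\mathcal{T}_{(m)}$ where $\mathcal{T}_{(0)}=\{X\}$ and $\mathcal{T}_{(m+1)}=\bigcup_{I\in\mathcal{T}_{(m)}}\mathcal{C}(I)$; (iv) $\lim_{m\to\infty}\sup_{I\in\mathcal{T}_{(m)}}\mu(I)=0$. The associated maximal operator is $\mathcal{M}_{\mathcal{T}}\phi(x)=\sup\{\frac{1}{\mu(I)}\int_I|\phi|\,d\mu : x\in I\in\mathcal{T}\}$ for $\phi\in L^1(X,\mu)$. $\|g\|_{p,\infty}=\sup\{\lambda\,\mu(\{|g|>\lambda\})^{1/p}:\lambda>0\}$ and $|||\phi|||_{p,\infty}=\sup\{\mu(E)^{-1+1/p}\int_E|\phi|\,d\mu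 : E \text{ measurable}, \mu(E)>0\}$. *)

theory Defs
  imports "HOL-Probability.Probability"
begin

definition nonatomic :: "'a measure \<Rightarrow> bool" where
  "nonatomic M \<longleftrightarrow> (\<forall>A\<in>sets M. 0 < measure M A \<longrightarrow>
      (\<exists>B\<in>sets M. B \<subseteq> A \<and> 0 < measure M B \<and> measure M B < measure M A))"

primrec tree_level :: "('a set \<Rightarrow> 'a set set) \<Rightarrow> 'a set \<Rightarrow> nat \<Rightarrow> 'a set set" where
  "tree_level C X 0 = {X}"
| "tree_level C X (Suc m) = \<Union> (C ` tree_level C X m)"

definition is_tree_with :: "'a measure \<Rightarrow> 'a set set \<Rightarrow> ('a set \<Rightarrow> 'a set set) \<Rightarrow> bool" where
  "is_tree_with M T C \<longleftrightarrow>
     space M \<in> T \<and> (\<forall>I\<in>T. I \<in> sets M \<and> 0 < measure M I)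
   \<and> (\<forall>I\<in>T. finite (C I) \<and> 2 \<le> card (C I) \<and> C I \<subseteq> T \<and> (\<forall>J\<in>C I. J \<subseteq> I)
        \<and> (\<forall>J\<in>C I. \<forall>K\<in>C I. J \<noteq> K \<longrightarrow> measure M (J \<inter> K) = 0)
        \<and> \<Union> (C I) = I)
   \<and> T = (\<Union>m. tree_level C (space M) m)
   \<and> (\<lambda>m. Sup (measure M ` tree_level C (space M) m)) \<longlonglongrightarrow> 0"

definition is_tree :: "'a measure \<Rightarrow> 'a set set \<Rightarrow> bool" where
  "is_tree M T \<longleftrightarrow> (\<exists>C. is_tree_with M T C)"

definition maximal_op :: "'a measure \<Rightarrow> 'a set set \<Rightarrow> ('a \<Rightarrow> real) \<Rightarrow> 'a \<Rightarrow> ennreal" where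
  "maximal_op M T \<phi> x =
     (SUP I\<in>{I\<in>T. x \<in> I}. (\<integral>\<^sup>+y\<in>I. ennreal \<bar>\<phi> y\<bar> \<partial>M) / emeasure M I)"

definition weak_norm :: "'a measure \<Rightarrow> real \<Rightarrow> ('a \<Rightarrow> ennreal) \<Rightarrow> ennreal" where
  "weak_norm M p g =
     (SUP t\<in>{0<..}. ennreal (t * (measure M {x\<in>space M. ennreal t < g x}) powr (1/p)))"

definition triple_norm :: "'a measure \<Rightarrow> real \<Rightarrow> ('a \<Rightarrow> real) \<Rightarrow> ennreal" where
  "triple_norm M p \<phi> =
     (SUP E\<in>{E\<in>sets M. 0 < measure M E}.
        ennreal (measure M E powr (-1 + 1/p)) * (\<integral>\<^sup>+x\<in>E. ennreal \<bar>\<phi> x\<bar> \<partial>M))"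

definition Bfun :: "'a measure \<Rightarrow> 'a set set \<Rightarrow> real \<Rightarrow> real \<Rightarrow> real \<Rightarrow> ennreal" where
  "Bfun M T p f F =
     Sup {weak_norm M p (maximal_op M T \<phi>) | \<phi>.
           integrable M \<phi> \<and> (\<forall>x\<in>space M. 0 \<le> \<phi> x) \<and>
           integral\<^sup>L M \<phi> = f \<and> triple_norm M p \<phi> = ennreal F}"

end

theory Submission
  imports Defs
begin

text \<open>
  Upper bound, the weak-type inequality ||M_T \<phi>||_{p,\<infinity>} \<le> |||\<phi>|||_{p,\<infinity>}: the level set
  {M_T \<phi> > t} is the union of the nodes on which \<phi> has average > t.  A stopping-time argument
  writes it as an increasing union of finite, almost disjoint unions of such nodes; each of
  them is a set A with t \<mu>(A) \<le> \<integral>_A \<phi> \<le> F \<mu>(A)^(1-1/p), hence \<mu>(A) \<le> (F/t)^p, and this bound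
  passes to the union.

  Lower bound: the function equal to h = F a^(-1/p) on a tree node I of small measure a and to
  a suitable constant c elsewhere has integral f and triple norm exactly F (by concavity of
  x^(1-1/p)), while its maximal function is \<ge> h on I, so its weak norm is \<ge> h a^(1/p) = F.
  Nodes of arbitrarily small measure exist because node sizes tend to zero along the levels.
\<close>

lemma integrable_imp_set_integrable:
  fixes g :: "'a \<Rightarrow> real"
  assumes "integrable M g" "A \<in> sets M"
  shows "set_integrable M A g"
  unfolding set_integrable_def using integrable_mult_indicator[OF assms(2,1)] by simp

lemma set_integral_nonneg_real:
  fixes \<phi> :: "'a \<Rightarrow> real"
  assumes "\<forall>x\<in>space M. 0 \<le> \<phi> x"
  shows "0 \<le> (LINT x:A|M. \<phi> x)"
  unfolding set_lebesgue_integral_def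
  using assms by (intro integral_nonneg_AE AE_I2) (auto simp: indicator_def)

lemma nn_set_integral_abs_eq:
  fixes \<phi> :: "'a \<Rightarrow> real"
  assumes "integrable M \<phi>" "\<forall>x\<in>space M. 0 \<le> \<phi> x" "A \<in> sets M"
  shows "(\<integral>\<^sup>+x\<in>A. ennreal \<bar>\<phi> x\<bar> \<partial>M) = ennreal (LINT x:A|M. \<phi> x)"
proof -
  have "(\<integral>\<^sup>+x\<in>A. ennreal \<bar>\<phi> x\<bar> \<partial>M) = (\<integral>\<^sup>+x\<in>A. ennreal (\<phi> x) \<partial>M)"
    using assms(2) by (intro nn_integral_cong) simp
  also have "\<dots> = ennreal (LINT x:A|M. \<phi> x)"
    using assms by (intro nn_set_integral_eq_set_integral AE_I2 integrable_imp_set_integrable) auto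
  finally show ?thesis .
qed

lemma set_integral_diff_const:
  fixes \<phi> :: "'a \<Rightarrow> real"
  assumes "finite_measure M" "integrable M \<phi>" "A \<in> sets M"
  shows "(LINT x:A|M. \<phi> x - t) = (LINT x:A|M. \<phi> x) - t * measure M A"
proof -
  interpret finite_measure M by (rule assms(1))
  have "(LINT x:A|M. \<phi> x - t) = (LINT x:A|M. \<phi> x) - (LINT x:A|M. t)"
    using assms by (intro set_integral_diff(2) integrable_imp_set_integrable) auto
  then show ?thesis using assms(3) by (simp add: set_integral_const)
qed

lemma powr_inverse_le_iff:
  fixes a b p :: real
  assumes "0 \<le> a" "0 \<le> b" "0 < p"
  shows "a powr (1/p) \<le> b \<longleftrightarrow> a \<le> b powr p"
proof
  assume "a powr (1/p) \<le> b"
  then have "(a powr (1/p)) powr p \<le> b powr p" using assms by (intro powr_mono2) auto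
  then show "a \<le> b powr p" using assms by (simp add: powr_powr)
next
  assume "a \<le> b powr p"
  then have "a powr (1/p) \<le> (b powr p) powr (1/p)" using assms by (intro powr_mono2) auto
  then show "a powr (1/p) \<le> b" using assms by (simp add: powr_powr)
qed

lemma tree_level_Suc_children:
  "tree_level C I (Suc m) = (\<Union>K\<in>C I. tree_level C K m)"
proof (induction m)
  case 0
  show ?case by auto
next
  case (Suc m)
  have "tree_level C I (Suc (Suc m)) = \<Union> (C ` tree_level C I (Suc m))" by simp
  also have "\<dots> = (\<Union>K\<in>C I. \<Union> (C ` tree_level C K m))" unfolding Suc.IH by blast
  finally show ?case by simp
qed

context
  fixes M :: "'a measure" and T :: "'a set set" and C :: "'a set \<Rightarrow> 'a set set"
  assumes tree: "is_tree_with M T C"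
begin

lemma tree_root: "space M \<in> T"
  using tree unfolding is_tree_with_def by (elim conjE)

lemma tree_nodes: "\<forall>I\<in>T. I \<in> sets M \<and> 0 < measure M I"
  using tree unfolding is_tree_with_def by (elim conjE)

lemma tree_children:
  "\<forall>I\<in>T. finite (C I) \<and> 2 \<le> card (C I) \<and> C I \<subseteq> T \<and> (\<forall>J\<in>C I. J \<subseteq> I)
      \<and> (\<forall>J\<in>C I. \<forall>K\<in>C I. J \<noteq> K \<longrightarrow> measure M (J \<inter> K) = 0) \<and> \<Union> (C I) = I"
  using tree unfolding is_tree_with_def by (elim conjE)

lemma tree_nodes_eq: "T = (\<Union>m. tree_level C (space M) m)"
  using tree unfolding is_tree_with_def by (elim conjE)

lemma tree_level_sup_tendsto: "(\<lambda>m. Sup (measure M ` tree_level C (space M) m)) \<longlonglongrightarrow> 0"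
  using tree unfolding is_tree_with_def by (elim conjE)

lemma tree_node_sets: "I \<in> T \<Longrightarrow> I \<in> sets M"
  using tree_nodes by blast

lemma tree_node_pos: "I \<in> T \<Longrightarrow> 0 < measure M I"
  using tree_nodes by blast

lemma tree_children_finite: "I \<in> T \<Longrightarrow> finite (C I)"
  using tree_children by blast

lemma tree_children_nonempty: "I \<in> T \<Longrightarrow> C I \<noteq> {}"
  using tree_children by fastforce

lemma tree_children_nodes: "I \<in> T \<Longrightarrow> J \<in> C I \<Longrightarrow> J \<in> T"
  using tree_children by blast

lemma tree_children_subset: "I \<in> T \<Longrightarrow> J \<in> C I \<Longrightarrow> J \<subseteq> I"
  using tree_children by blast

lemma tree_children_almost_disjoint:
  "I \<in> T \<Longrightarrow> J \<in> C I \<Longrightarrow> K \<in> C I \<Longrightarrow> J \<noteq> K \<Longrightarrow> measure M (J \<inter> K) = 0"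
  using tree_children by blast

text \<open>A node has positive, hence finite, measure; in particular, since the whole space is the
  root, a measure carrying a tree is finite.\<close>
lemma tree_node_emeasure: "I \<in> T \<Longrightarrow> emeasure M I = ennreal (measure M I)"
  using tree_node_pos[of I] by (intro emeasure_eq_ennreal_measure) (auto simp: measure_def)

lemma tree_finite_measure: "finite_measure M"
  using tree_node_emeasure[OF tree_root] by (intro finite_measureI) simp

lemma tree_level_sub: "I \<in> T \<Longrightarrow> J \<in> tree_level C I m \<Longrightarrow> J \<in> T \<and> J \<subseteq> I"
proof (induction m arbitrary: J)
  case (Suc m)
  then obtain K where "K \<in> tree_level C I m" "J \<in> C K" by auto
  with Suc tree_children_nodes tree_children_subset show ?case by blast
qed simp

lemma tree_level_nonempty: "I \<in> T \<Longrightarrow> tree_level C I m \<noteq> {}"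
proof (induction m arbitrary: I)
  case (Suc m)
  then obtain K where "K \<in> C I" using tree_children_nonempty by blast
  with Suc show ?case unfolding tree_level_Suc_children using tree_children_nodes by blast
qed simp

text \<open>Since the sizes of the nodes of a level tend to zero, the tree has nodes of arbitrarily
  small measure.  This is what replaces non-atomicity of the measure in the lower bound.\<close>
lemma tree_small_node:
  assumes "0 < \<delta>"
  obtains I where "I \<in> T" "measure M I < \<delta>"
proof -
  obtain m where m: "Sup (measure M ` tree_level C (space M) m) < \<delta>"
    using order_tendstoD(2)[OF tree_level_sup_tendsto assms] by (auto simp: eventually_sequentially)
  obtain I where I: "I \<in> tree_level C (space M) m"
    using tree_level_nonempty[OF tree_root] by blast
  have "bdd_above (measure M ` tree_level C (space M) m)"
    using finite_measure.bounded_measure[OF tree_finite_measure] by (intro bdd_aboveI) blast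
  then have "measure M I \<le> Sup (measure M ` tree_level C (space M) m)"
    using I by (intro cSup_upper) auto
  with m I tree_level_sub[OF tree_root] that show ?thesis by fastforce
qed

end

section \<open>Stopping-time decomposition\<close>

text \<open>These unions exhaust the level sets of the maximal operator, and they
  are finite unions of almost disjoint members of S.\<close>
primrec stopping_union :: "'a set set \<Rightarrow> ('a set \<Rightarrow> 'a set set) \<Rightarrow> 'a set \<Rightarrow> nat \<Rightarrow> 'a set" where
  "stopping_union S C I 0 = (if I \<in> S then I else {})"
| "stopping_union S C I (Suc n) = (if I \<in> S then I else (\<Union>J\<in>C I. stopping_union S C J n))"

lemma stopping_union_mono: "stopping_union S C I n \<subseteq> stopping_union S C I (Suc n)"
proof (induction n arbitrary: I)
  case (Suc n)
  have "(\<Union>J\<in>C I. stopping_union S C J n) \<subseteq> (\<Union>J\<in>C I. stopping_union S C J (Suc n))"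
    using Suc.IH by blast
  then show ?case unfolding stopping_union.simps(2)[of S C I] by auto
qed simp

lemma stopping_union_subset_Union: "stopping_union S C I n \<subseteq> \<Union> S"
  by (induction n arbitrary: I) auto

context
  fixes M :: "'a measure" and T :: "'a set set" and C :: "'a set \<Rightarrow> 'a set set"
  assumes tree: "is_tree_with M T C"
begin

lemma tree_children_null_overlap:
  assumes "I \<in> T" "J \<in> C I" "K \<in> C I" "J \<noteq> K"
  shows "J \<inter> K \<in> null_sets M"
proof -
  have "J \<inter> K \<in> sets M"
    using assms tree_children_nodes[OF tree] tree_node_sets[OF tree] by blast
  moreover have "measure M (J \<inter> K) = 0"
    using tree_children_almost_disjoint[OF tree assms] .
  ultimately show ?thesis
    using finite_measure.emeasure_eq_measure[OF tree_finite_measure[OF tree]] by auto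
qed

lemma stopping_union_sets:
  "I \<in> T \<Longrightarrow> stopping_union S C I n \<in> sets M \<and> stopping_union S C I n \<subseteq> I"
proof (induction n arbitrary: I)
  case 0
  then show ?case using tree_node_sets[OF tree] by auto
next
  case (Suc n)
  have "(\<Union>J\<in>C I. stopping_union S C J n) \<in> sets M"
    using Suc tree_children_finite[OF tree] tree_children_nodes[OF tree] by (intro sets.finite_UN) auto
  moreover have "(\<Union>J\<in>C I. stopping_union S C J n) \<subseteq> I"
    using Suc tree_children_nodes[OF tree] tree_children_subset[OF tree] by blast
  ultimately show ?case using tree_node_sets[OF tree Suc.prems] by simp
qed

lemma stopping_union_covers:
  "I \<in> T \<Longrightarrow> J \<in> tree_level C I m \<Longrightarrow> J \<in> S \<Longrightarrow> J \<subseteq> stopping_union S C I m"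
proof (induction m arbitrary: I)
  case (Suc m)
  show ?case
  proof (cases "I \<in> S")
    case True
    then show ?thesis using tree_level_sub[OF tree Suc.prems(1,2)] by simp
  next
    case False
    from Suc.prems(2) obtain K where "K \<in> C I" "J \<in> tree_level C K m"
      unfolding tree_level_Suc_children by blast
    with Suc tree_children_nodes[OF tree] False show ?thesis by fastforce
  qed
qed simp

text \<open>If g has nonnegative integral over every member of S, then also over every stopping
  union, since the latter is an almost disjoint finite union of members of S.\<close>
lemma stopping_union_integral_nonneg:
  fixes g :: "'a \<Rightarrow> real"
  assumes g: "integrable M g" and S: "\<forall>J\<in>S. 0 \<le> (LINT x:J|M. g x)"
  shows "I \<in> T \<Longrightarrow> 0 \<le> (LINT x:stopping_union S C I n|M. g x)"
proof (induction n arbitrary: I)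
  case 0
  then show ?case using S by (simp add: set_lebesgue_integral_def)
next
  case (Suc n)
  show ?case
  proof (cases "I \<in> S")
    case True
    then show ?thesis using S by simp
  next
    case False
    let ?A = "\<lambda>J. stopping_union S C J n"
    have A: "?A J \<in> sets M" "?A J \<subseteq> J" if "J \<in> C I" for J
      using stopping_union_sets tree_children_nodes[OF tree Suc.prems that] by auto
    have disjoint: "AE x in M. x \<in> ?A J \<and> x \<in> ?A K \<longrightarrow> J = K" if "J \<in> C I" "K \<in> C I" for J K
    proof (cases "J = K")
      case False
      then have "J \<inter> K \<in> null_sets M"
        using tree_children_null_overlap[OF Suc.prems that] by simp
      from AE_not_in[OF this] show ?thesis
        by eventually_elim (use A[OF that(1)] A[OF that(2)] in blast)
    qed simp
    have "(LINT x:(\<Union>J\<in>C I. ?A J)|M. g x) = (\<Sum>J\<in>C I. LINT x:?A J|M. g x)"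
      using disjoint A g tree_children_finite[OF tree Suc.prems]
      by (intro set_integral_finite_UN_AE integrable_imp_set_integrable) auto
    also have "\<dots> \<ge> 0"
      using Suc.IH tree_children_nodes[OF tree Suc.prems] by (intro sum_nonneg) auto
    finally show ?thesis using False by simp
  qed
qed

lemma stopping_unions_exhaust:
  assumes "S \<subseteq> T"
  shows "\<Union> S = (\<Union>n. stopping_union S C (space M) n)"
proof
  show "\<Union> S \<subseteq> (\<Union>n. stopping_union S C (space M) n)"
  proof
    fix x assume "x \<in> \<Union> S"
    then obtain J where J: "J \<in> S" "x \<in> J" by blast
    have "J \<in> (\<Union>m. tree_level C (space M) m)"
      using assms J(1) by (simp only: tree_nodes_eq[OF tree, symmetric]) blast
    then obtain m where "J \<in> tree_level C (space M) m" by blast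
    then have "J \<subseteq> stopping_union S C (space M) m"
      using stopping_union_covers[OF tree_root[OF tree] _ J(1)] by blast
    with J(2) show "x \<in> (\<Union>n. stopping_union S C (space M) n)" by blast
  qed
  show "(\<Union>n. stopping_union S C (space M) n) \<subseteq> \<Union> S"
    using stopping_union_subset_Union by (intro UN_least)
qed

end

lemma triple_norm_lower:
  fixes \<phi> :: "'a \<Rightarrow> real"
  assumes \<phi>: "integrable M \<phi>" "\<forall>x\<in>space M. 0 \<le> \<phi> x" and E: "E \<in> sets M" "0 < measure M E"
  shows "ennreal (measure M E powr (-1+1/p) * (LINT x:E|M. \<phi> x)) \<le> triple_norm M p \<phi>"
proof -
  have "ennreal (measure M E powr (-1+1/p)) * (\<integral>\<^sup>+x\<in>E. ennreal \<bar>\<phi> x\<bar> \<partial>M) \<le> triple_norm M p \<phi>"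
    unfolding triple_norm_def by (rule SUP_upper) (use E in auto)
  then show ?thesis
    using nn_set_integral_abs_eq[OF \<phi> E(1)] set_integral_nonneg_real[OF \<phi>(2)]
    by (simp add: ennreal_mult)
qed

lemma heavy_set_measure_bound:
  fixes \<phi> :: "'a \<Rightarrow> real"
  assumes \<phi>: "integrable M \<phi>" "\<forall>x\<in>space M. 0 \<le> \<phi> x"
    and F: "triple_norm M p \<phi> \<le> ennreal F" "0 \<le> F" and p: "0 < p" and t: "0 < t"
    and A: "A \<in> sets M" "t * measure M A \<le> (LINT x:A|M. \<phi> x)"
  shows "measure M A \<le> (F / t) powr p"
proof (cases "measure M A = 0")
  case False
  then have pos: "0 < measure M A" using measure_nonneg[of M A] by linarith
  have "measure M A * measure M A powr (-1+1/p) = measure M A powr (1/p)"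
    using pos by (simp add: powr_mult_base)
  then have "t * measure M A powr (1/p) = measure M A powr (-1+1/p) * (t * measure M A)"
    by (simp add: algebra_simps)
  also have "\<dots> \<le> measure M A powr (-1+1/p) * (LINT x:A|M. \<phi> x)"
    using A(2) by (intro mult_left_mono) auto
  also have "\<dots> \<le> F"
  proof -
    have "ennreal (measure M A powr (-1+1/p) * (LINT x:A|M. \<phi> x)) \<le> ennreal F"
      using triple_norm_lower[OF \<phi> A(1) pos] F(1) by (rule order_trans)
    then show ?thesis using F(2) by simp
  qed
  finally have "measure M A powr (1/p) \<le> F / t" using t by (simp add: pos_le_divide_eq mult.commute)
  then show ?thesis using pos F(2) t p by (simp add: powr_inverse_le_iff)
qed simp

lemma weak_norm_lower:
  fixes g :: "'a \<Rightarrow> ennreal" and h p :: real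
  assumes M: "finite_measure M"
    and level: "\<And>t. 0 < t \<Longrightarrow> {x\<in>space M. ennreal t < g x} \<in> sets M"
    and I: "I \<in> sets M" "\<And>x. x \<in> I \<Longrightarrow> ennreal h \<le> g x" and h: "0 < h" and p: "0 < p"
  shows "ennreal (h * measure M I powr (1/p)) \<le> weak_norm M p g"
proof -
  have below: "ennreal (t * measure M I powr (1/p)) \<le> weak_norm M p g" if t: "0 < t" "t < h" for t
  proof -
    have "ennreal t < ennreal h" using t by (simp add: ennreal_less_iff)
    then have "I \<subseteq> {x\<in>space M. ennreal t < g x}"
      using I sets.sets_into_space[OF I(1)] by (auto intro: order.strict_trans2)
    then have "measure M I \<le> measure M {x\<in>space M. ennreal t < g x}"
      using finite_measure.finite_measure_mono[OF M _ level[OF t(1)]] by blast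
    then have "t * measure M I powr (1/p) \<le> t * measure M {x\<in>space M. ennreal t < g x} powr (1/p)"
      using t p by (intro mult_left_mono powr_mono2) auto
    then have "ennreal (t * measure M I powr (1/p))
        \<le> ennreal (t * measure M {x\<in>space M. ennreal t < g x} powr (1/p))"
      by (rule ennreal_leI)
    also have "\<dots> \<le> weak_norm M p g"
      unfolding weak_norm_def by (rule SUP_upper) (use t in auto)
    finally show ?thesis .
  qed
  show ?thesis
  proof (cases "weak_norm M p g")
    case (real w)
    have "h * measure M I powr (1/p) \<le> w"
    proof (rule field_le_mult_one_interval)
      fix z :: real assume z: "0 < z" "z < 1"
      have "ennreal (z * h * measure M I powr (1/p)) \<le> ennreal w"
        using below[of "z * h"] z h real(2) by simp
      then show "z * (h * measure M I powr (1/p)) \<le> w" using real(1) by (simp add: mult.assoc)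
    qed
    then show ?thesis unfolding real(2) by (rule ennreal_leI)
  qed simp
qed

section \<open>The weak-type bound for the maximal operator\<close>

context
  fixes M :: "'a measure" and T :: "'a set set" and C :: "'a set \<Rightarrow> 'a set set"
    and \<phi> :: "'a \<Rightarrow> real"
  assumes tree: "is_tree_with M T C"
    and \<phi>: "integrable M \<phi>" "\<forall>x\<in>space M. 0 \<le> \<phi> x"
begin

lemma tree_node_average:
  assumes I: "I \<in> T"
  shows "(\<integral>\<^sup>+y\<in>I. ennreal \<bar>\<phi> y\<bar> \<partial>M) / emeasure M I = ennreal ((LINT x:I|M. \<phi> x) / measure M I)"
  using nn_set_integral_abs_eq[OF \<phi> tree_node_sets[OF tree I]] tree_node_emeasure[OF tree I]
    tree_node_pos[OF tree I] set_integral_nonneg_real[OF \<phi>(2)]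
  by (simp add: divide_ennreal)

lemma maximal_op_level_set:
  assumes t: "0 < t"
  shows "{x\<in>space M. ennreal t < maximal_op M T \<phi> x} = \<Union> {I\<in>T. t * measure M I < (LINT x:I|M. \<phi> x)}"
proof -
  have heavy: "ennreal t < (\<integral>\<^sup>+y\<in>I. ennreal \<bar>\<phi> y\<bar> \<partial>M) / emeasure M I
      \<longleftrightarrow> t * measure M I < (LINT x:I|M. \<phi> x)" if I: "I \<in> T" for I
    using t tree_node_pos[OF tree I] unfolding tree_node_average[OF I]
    by (simp add: ennreal_less_iff pos_less_divide_eq)
  show ?thesis
  proof (intro set_eqI iffI)
    fix x assume "x \<in> {x\<in>space M. ennreal t < maximal_op M T \<phi> x}"
    then obtain I where "I \<in> T" "x \<in> I"
      "ennreal t < (\<integral>\<^sup>+y\<in>I. ennreal \<bar>\<phi> y\<bar> \<partial>M) / emeasure M I"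
      unfolding maximal_op_def by (auto simp: less_SUP_iff)
    with heavy show "x \<in> \<Union> {I\<in>T. t * measure M I < (LINT x:I|M. \<phi> x)}" by blast
  next
    fix x assume "x \<in> \<Union> {I\<in>T. t * measure M I < (LINT x:I|M. \<phi> x)}"
    then obtain I where I: "I \<in> T" "x \<in> I" "t * measure M I < (LINT x:I|M. \<phi> x)" by blast
    then have "ennreal t < maximal_op M T \<phi> x"
      unfolding maximal_op_def using heavy[OF I(1)] by (auto simp: less_SUP_iff)
    moreover have "x \<in> space M"
      using sets.sets_into_space[OF tree_node_sets[OF tree I(1)]] I(2) by blast
    ultimately show "x \<in> {x\<in>space M. ennreal t < maximal_op M T \<phi> x}" by blast
  qed
qed

lemma maximal_op_level_set_stopping:
  assumes t: "0 < t"
  defines "S \<equiv> {I\<in>T. t * measure M I < (LINT x:I|M. \<phi> x)}"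
  shows "{x\<in>space M. ennreal t < maximal_op M T \<phi> x} = (\<Union>n. stopping_union S C (space M) n)"
  unfolding maximal_op_level_set[OF t] S_def[symmetric]
  by (rule stopping_unions_exhaust[OF tree]) (auto simp: S_def)

lemma maximal_op_level_set_sets:
  assumes t: "0 < t"
  shows "{x\<in>space M. ennreal t < maximal_op M T \<phi> x} \<in> sets M"
  unfolding maximal_op_level_set_stopping[OF t]
  using stopping_union_sets[OF tree tree_root[OF tree]] by blast

text \<open>Each stopping union for the heavy nodes is itself heavy, being an almost disjoint union
  of heavy nodes.\<close>
lemma stopping_union_heavy:
  assumes t: "0 < t"
  defines "S \<equiv> {I\<in>T. t * measure M I < (LINT x:I|M. \<phi> x)}"
  shows "t * measure M (stopping_union S C (space M) n) \<le> (LINT x:stopping_union S C (space M) n|M. \<phi> x)"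
proof -
  have fin: "finite_measure M" by (rule tree_finite_measure[OF tree])
  have "integrable M (\<lambda>x. \<phi> x - t)"
    using fin \<phi>(1) by (simp add: finite_measure.integrable_const)
  moreover have "\<forall>J\<in>S. 0 \<le> (LINT x:J|M. \<phi> x - t)"
    using set_integral_diff_const[OF fin \<phi>(1)] tree_node_sets[OF tree] by (auto simp: S_def)
  ultimately have "0 \<le> (LINT x:stopping_union S C (space M) n|M. \<phi> x - t)"
    by (rule stopping_union_integral_nonneg[OF tree _ _ tree_root[OF tree]])
  then show ?thesis
    using set_integral_diff_const[OF fin \<phi>(1)] stopping_union_sets[OF tree tree_root[OF tree]] by simp
qed

lemma maximal_op_ge_average:
  assumes "I \<in> T" "x \<in> I"
  shows "ennreal ((LINT y:I|M. \<phi> y) / measure M I) \<le> maximal_op M T \<phi> x"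
  unfolding maximal_op_def tree_node_average[OF assms(1), symmetric]
  by (rule SUP_upper) (use assms in blast)

theorem weak_norm_maximal_op_le:
  assumes p: "0 < p"
  shows "weak_norm M p (maximal_op M T \<phi>) \<le> triple_norm M p \<phi>"
proof (cases "triple_norm M p \<phi>")
  case (real F)
  show ?thesis
    unfolding weak_norm_def real(2)
  proof (rule SUP_least)
    fix t :: real assume "t \<in> {0<..}"
    then have t: "0 < t" by simp
    define \<Omega> where "\<Omega> n = stopping_union {I\<in>T. t * measure M I < (LINT x:I|M. \<phi> x)} C (space M) n" for n
    have bound: "measure M (\<Omega> n) \<le> (F / t) powr p" for n
      using heavy_set_measure_bound[OF \<phi> _ real(1) p t] real(2) stopping_union_heavy[OF t]
        stopping_union_sets[OF tree tree_root[OF tree]] unfolding \<Omega>_def by simp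
    have "range \<Omega> \<subseteq> sets M"
      using stopping_union_sets[OF tree tree_root[OF tree]] unfolding \<Omega>_def by blast
    moreover have "incseq \<Omega>"
      unfolding \<Omega>_def by (intro incseq_SucI stopping_union_mono)
    ultimately have "(\<lambda>n. measure M (\<Omega> n)) \<longlonglongrightarrow> measure M (\<Union>n. \<Omega> n)"
      by (rule finite_measure.finite_Lim_measure_incseq[OF tree_finite_measure[OF tree]])
    then have "measure M (\<Union>n. \<Omega> n) \<le> (F / t) powr p"
      using bound by (intro LIMSEQ_le_const2) auto
    then have "measure M (\<Union>n. \<Omega> n) powr (1/p) \<le> F / t"
      using t p real(1) by (simp add: powr_inverse_le_iff)
    then have "t * measure M (\<Union>n. \<Omega> n) powr (1/p) \<le> F"
      using t by (simp add: pos_le_divide_eq mult.commute)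
    then show "ennreal (t * measure M {x\<in>space M. ennreal t < maximal_op M T \<phi> x} powr (1/p)) \<le> ennreal F"
      unfolding maximal_op_level_set_stopping[OF t] \<Omega>_def by (rule ennreal_leI)
  qed
qed simp

end

section \<open>An extremal function\<close>

text \<open>Concavity of x \<mapsto> x^q for 0 < q < 1: on [a,1] the chord from (a, a^q) to (1,1) lies
  below the graph.\<close>
lemma powr_chord_below:
  fixes a e q :: real
  assumes q: "0 < q" "q < 1" and a: "0 < a" "a < 1" and e: "a \<le> e" "e \<le> 1"
  shows "(1 - (e-a)/(1-a)) * a powr q + (e-a)/(1-a) \<le> e powr q"
proof -
  define \<theta> where "\<theta> = (e-a)/(1-a)"
  have \<theta>: "0 \<le> \<theta>" "\<theta> \<le> 1" using a e unfolding \<theta>_def by (auto simp: field_simps)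
  have cv: "convex_on {0<..} (\<lambda>x::real. x powr (1/q))"
    using q by (intro powr_convex) (simp add: field_simps)
  have "((1 - \<theta>) *\<^sub>R a powr q + \<theta> *\<^sub>R 1) powr (1/q) \<le> (1 - \<theta>) * (a powr q) powr (1/q) + \<theta> * 1 powr (1/q)"
    using a by (intro convex_onD[OF cv \<theta>]) auto
  also have "\<dots> = (1 - \<theta>) * a + \<theta>" using a q by (simp add: powr_powr)
  also have "\<dots> = e" using a unfolding \<theta>_def by (simp add: divide_simps) (simp add: algebra_simps)
  finally have le: "((1 - \<theta>) * a powr q + \<theta>) powr (1/q) \<le> e" by simp
  have "(1 - \<theta>) * a powr q + \<theta> = (((1 - \<theta>) * a powr q + \<theta>) powr (1/q)) powr q"
    using \<theta> q by (simp add: powr_powr)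
  also have "\<dots> \<le> e powr q" using le q \<theta> by (intro powr_mono2) auto
  finally show ?thesis unfolding \<theta>_def .
qed

text \<open>The profile inequality behind the triple norm of a two-valued function which equals
  h = F a^(-1/p) on a set of measure a and c \<le> (F - h a)/(1 - a) elsewhere: a set of measure e
  meeting the first set in measure e1 carries mass c e + (h - c) e1 \<le> F e^(1-1/p).\<close>
lemma two_step_profile_bound:
  fixes a c e e1 h p F :: real
  assumes p: "1 < p" and a: "0 < a" "a < 1" and F: "0 < F" and h: "h = F * a powr (-1/p)"
    and c: "0 \<le> c" "c \<le> (F - h * a) / (1 - a)"
    and e: "0 < e" "e \<le> 1" and e1: "0 \<le> e1" "e1 \<le> e" "e1 \<le> a"
  shows "c * e + (h - c) * e1 \<le> F * e powr (1 - 1/p)"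
proof -
  define q where "q = 1 - 1/p"
  have q: "0 < q" "q < 1" using p unfolding q_def by (auto simp: field_simps)
  have power: "x powr (-1/p) * x = x powr q" if "0 < x" for x :: real
    using that powr_mult_base[of x "-1/p"] unfolding q_def by (simp add: mult.commute)
  have ha: "h * a = F * a powr q" using power[OF a(1)] unfolding h by (simp add: mult.assoc)
  have "1 powr (-1/p) \<le> a powr (-1/p)" using a p by (intro powr_mono2') auto
  then have hF: "F \<le> h" unfolding h using F by simp
  have "(F - h * a) / (1 - a) \<le> h" using a hF by (simp add: divide_le_eq algebra_simps)
  then have ch: "c \<le> h" using c(2) by linarith
  show ?thesis
  proof (cases "e \<le> a")
    case True
    have "c * e + (h - c) * e1 \<le> c * e + (h - c) * e" using ch e1 by (intro add_left_mono mult_left_mono) auto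
    also have "\<dots> = F * (a powr (-1/p) * e)" unfolding h by (simp add: algebra_simps)
    also have "\<dots> \<le> F * (e powr (-1/p) * e)"
      using True e p F by (intro mult_left_mono mult_right_mono powr_mono2') auto
    also have "\<dots> = F * e powr q" using power[OF e(1)] by simp
    finally show ?thesis unfolding q_def .
  next
    case False
    define \<theta> where "\<theta> = (e-a)/(1-a)"
    have "c * e + (h - c) * e1 \<le> c * e + (h - c) * a" using ch e1 by (intro add_left_mono mult_left_mono) auto
    also have "\<dots> = c * (e - a) + h * a" by (simp add: algebra_simps)
    also have "\<dots> \<le> (F - h * a) / (1 - a) * (e - a) + h * a"
      using c(2) False by (intro add_right_mono mult_right_mono) auto
    also have "\<dots> = (F - F * a powr q) * \<theta> + F * a powr q"
      unfolding ha \<theta>_def by simp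
    also have "\<dots> = F * ((1 - \<theta>) * a powr q + \<theta>)" by (simp add: algebra_simps)
    also have "\<dots> \<le> F * e powr q"
      using powr_chord_below[OF q a _ e(2)] False F unfolding \<theta>_def by (intro mult_left_mono) auto
    finally show ?thesis unfolding q_def .
  qed
qed

definition two_valued :: "'a set \<Rightarrow> real \<Rightarrow> real \<Rightarrow> 'a \<Rightarrow> real" where
  "two_valued I h c x = c + (h - c) * indicator I x"

lemma two_valued_nonneg: "0 \<le> h \<Longrightarrow> 0 \<le> c \<Longrightarrow> 0 \<le> two_valued I h c x"
  unfolding two_valued_def by (simp add: indicator_def)

context
  fixes M :: "'a measure" and I :: "'a set"
  assumes M: "finite_measure M" and I: "I \<in> sets M"
begin

lemma two_valued_integrable: "integrable M (two_valued I h c)"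
  unfolding two_valued_def using M I
  by (intro Bochner_Integration.integrable_add finite_measure.integrable_const
        integrable_mult_right integrable_real_indicator)
    (auto simp: finite_measure.emeasure_finite less_top[symmetric])

lemma two_valued_set_integral:
  assumes E: "E \<in> sets M"
  shows "(LINT x:E|M. two_valued I h c x) = c * measure M E + (h - c) * measure M (E \<inter> I)"
proof -
  have step: "integrable M (\<lambda>x. b * indicator A x :: real)" if "A \<in> sets M" for b A
    using M that by (intro integrable_mult_right integrable_real_indicator)
      (auto simp: finite_measure.emeasure_finite less_top[symmetric])
  have "(\<lambda>x. indicator E x *\<^sub>R two_valued I h c x) = (\<lambda>x. c * indicator E x + (h - c) * indicator (E \<inter> I) x)"
    unfolding two_valued_def by (simp add: fun_eq_iff indicator_def)
  then have "(LINT x:E|M. two_valued I h c x)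
      = (LINT x|M. c * indicator E x) + (LINT x|M. (h - c) * indicator (E \<inter> I) x)"
    unfolding set_lebesgue_integral_def
    using Bochner_Integration.integral_add[OF step[OF E] step[OF sets.Int[OF E I]]] by simp
  then show ?thesis using E I by (simp add: sets.Int_space_eq2)
qed

lemma two_valued_integral:
  "integral\<^sup>L M (two_valued I h c) = c * measure M (space M) + (h - c) * measure M I"
  using set_integral_space[OF two_valued_integrable, symmetric] two_valued_set_integral[OF sets.top] I
  by (simp add: sets.Int_space_eq1)

end

lemma two_valued_maximal_weak_norm:
  assumes tree: "is_tree_with M T C" and I: "I \<in> T" and h: "0 < h" and c: "0 \<le> c" and p: "0 < p"
  shows "ennreal (h * measure M I powr (1/p)) \<le> weak_norm M p (maximal_op M T (two_valued I h c))"
proof -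
  have fm: "finite_measure M" by (rule tree_finite_measure[OF tree])
  have Is: "I \<in> sets M" by (rule tree_node_sets[OF tree I])
  have \<phi>: "integrable M (two_valued I h c)" "\<forall>x\<in>space M. 0 \<le> two_valued I h c x"
    using two_valued_integrable[OF fm Is, of h c] two_valued_nonneg[of h c I] h c by auto
  have "(LINT y:I|M. two_valued I h c y) = h * measure M I"
    using two_valued_set_integral[OF fm Is Is] by (simp add: algebra_simps)
  then have "(LINT y:I|M. two_valued I h c y) / measure M I = h"
    using tree_node_pos[OF tree I] by simp
  then have "ennreal h \<le> maximal_op M T (two_valued I h c) x" if "x \<in> I" for x
    using maximal_op_ge_average[OF tree \<phi> I that] by simp
  then show ?thesis
    using h p by (intro weak_norm_lower[OF fm maximal_op_level_set_sets[OF tree \<phi>] Is]) auto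
qed

text \<open>For the parameters of two_step_profile_bound the two-valued function has triple norm
  exactly F: the profile bound gives \<le>, and the set I itself attains F.\<close>
lemma two_valued_triple_norm:
  fixes M :: "'a measure" and I :: "'a set" and a c h p F :: real
  assumes M: "prob_space M" and I: "I \<in> sets M" and a: "a = measure M I" "0 < a" "a < 1"
    and p: "1 < p" and F: "0 < F" and h: "h = F * a powr (-1/p)"
    and c: "0 \<le> c" "c \<le> (F - h * a) / (1 - a)"
  shows "triple_norm M p (two_valued I h c) = ennreal F"
proof -
  interpret prob_space M by (rule M)
  have fm: "finite_measure M" by unfold_locales
  have h0: "0 \<le> h" unfolding h using F by simp
  have \<phi>: "integrable M (two_valued I h c)" "\<forall>x\<in>space M. 0 \<le> two_valued I h c x"
    using two_valued_integrable[OF fm I, of h c] two_valued_nonneg[OF h0 c(1), of I] by auto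
  have cancel: "x powr (-1+1/p) * (F * x powr (1 - 1/p)) = F" if "0 < x" for x :: real
  proof -
    have "x powr (-1+1/p) * x powr (1 - 1/p) = x powr ((-1+1/p) + (1 - 1/p))"
      by (rule powr_add[symmetric])
    then show ?thesis using that by (simp add: algebra_simps)
  qed
  show ?thesis
  proof (rule antisym)
    show "triple_norm M p (two_valued I h c) \<le> ennreal F"
      unfolding triple_norm_def
    proof (rule SUP_least)
      fix E assume "E \<in> {E \<in> sets M. 0 < measure M E}"
      then have E: "E \<in> sets M" "0 < measure M E" by auto
      have e1: "0 \<le> measure M (E \<inter> I)" "measure M (E \<inter> I) \<le> measure M E" "measure M (E \<inter> I) \<le> a"
        using E(1) I unfolding a(1) by (auto intro: finite_measure_mono)
      have "measure M E powr (-1+1/p) * (c * measure M E + (h - c) * measure M (E \<inter> I))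
          \<le> measure M E powr (-1+1/p) * (F * measure M E powr (1 - 1/p))"
        using two_step_profile_bound[OF p a(2,3) F h c E(2) prob_le_1 e1] by (intro mult_left_mono) auto
      also have "\<dots> = F" using cancel[OF E(2)] .
      finally have "ennreal (measure M E powr (-1+1/p) * (LINT x:E|M. two_valued I h c x)) \<le> ennreal F"
        unfolding two_valued_set_integral[OF fm I E(1)] by (rule ennreal_leI)
      then show "ennreal (measure M E powr (-1 + 1/p)) * (\<integral>\<^sup>+x\<in>E. ennreal \<bar>two_valued I h c x\<bar> \<partial>M) \<le> ennreal F"
        using nn_set_integral_abs_eq[OF \<phi> E(1)] set_integral_nonneg_real[OF \<phi>(2)]
        by (simp add: ennreal_mult)
    qed
  next
    have "h * a = F * a powr (1 - 1/p)"
      using powr_mult_base[of a "-1/p"] a(2) unfolding h by (simp add: algebra_simps)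
    then have "measure M I powr (-1+1/p) * (LINT x:I|M. two_valued I h c x) = F"
      using cancel[OF a(2)] two_valued_set_integral[OF fm I I] a(1) by (simp add: algebra_simps)
    then show "ennreal F \<le> triple_norm M p (two_valued I h c)"
      using triple_norm_lower[OF \<phi> I, of p] a by simp
  qed
qed

lemma extremal_function:
  assumes M: "prob_space M" and tree: "is_tree_with M T C" and p: "1 < p" and f: "0 < f" "f \<le> F"
  obtains \<phi> where "integrable M \<phi>" "\<forall>x\<in>space M. 0 \<le> \<phi> x" "integral\<^sup>L M \<phi> = f"
    "triple_norm M p \<phi> = ennreal F" "ennreal F \<le> weak_norm M p (maximal_op M T \<phi>)"
proof -
  interpret prob_space M by (rule M)
  have fm: "finite_measure M" by unfold_locales
  define q where "q = 1 - 1/p"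
  have q: "0 < q" using p unfolding q_def by (simp add: field_simps)
  have F: "0 < F" using f by simp
  obtain I where I: "I \<in> T" "measure M I < (f/F) powr (1/q)"
    using tree_small_node[OF tree] f F by (metis divide_pos_pos powr_gt_zero less_irrefl)
  have Is: "I \<in> sets M" by (rule tree_node_sets[OF tree I(1)])
  define a where "a = measure M I"
  have "(f/F) powr (1/q) \<le> 1" using f F q by (intro powr_le1) auto
  then have a: "0 < a" "a < 1" using I tree_node_pos[OF tree I(1)] unfolding a_def by auto
  have "a powr q < ((f/F) powr (1/q)) powr q"
    using I a q unfolding a_def by (intro powr_less_mono2) auto
  then have aq: "a powr q < f/F" using f F q by (simp add: powr_powr)
  define h where "h = F * a powr (-1/p)"
  have h: "0 < h" unfolding h_def using F a by simp
  have ha: "h * a = F * a powr q"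
    using powr_mult_base[of a "-1/p"] a unfolding h_def q_def by (simp add: algebra_simps)
  have "h * a \<le> f" using aq F unfolding ha by (simp add: field_simps)
  define c where "c = (f - h * a) / (1 - a)"
  have c: "0 \<le> c" "c \<le> (F - h * a) / (1 - a)"
    unfolding c_def using \<open>h * a \<le> f\<close> a f by (auto intro: divide_right_mono)
  define \<phi> where "\<phi> = two_valued I h c"
  have \<phi>: "integrable M \<phi>" "\<forall>x\<in>space M. 0 \<le> \<phi> x"
    unfolding \<phi>_def using two_valued_integrable[OF fm Is] two_valued_nonneg[of h c] h c by auto
  have "integral\<^sup>L M \<phi> = c * (1 - a) + h * a"
    using two_valued_integral[OF fm Is] unfolding \<phi>_def a_def by (simp add: prob_space algebra_simps)
  then have "integral\<^sup>L M \<phi> = f" using a unfolding c_def by simp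
  moreover have "triple_norm M p \<phi> = ennreal F"
    unfolding \<phi>_def by (rule two_valued_triple_norm[OF M Is a_def a p F h_def c])
  moreover have "h * a powr (1/p) = F"
    using a unfolding h_def by (simp add: mult.assoc powr_add[symmetric])
  then have "ennreal F \<le> weak_norm M p (maximal_op M T \<phi>)"
    using two_valued_maximal_weak_norm[OF tree I(1) h c(1) less_trans[OF zero_less_one p]]
    unfolding \<phi>_def a_def by simp
  ultimately show ?thesis using \<phi> that by blast
qed

theorem corollary3p2:
  fixes M :: "'a measure" and T :: "'a set set" and p f F :: real
  assumes "prob_space M" and "nonatomic M" and "is_tree M T"
    and "1 < p" and "0 < f" and "f \<le> F"
  shows "Bfun M T p f F = ennreal F"
proof (rule antisym)
  obtain C where tree: "is_tree_with M T C" using assms(3) unfolding is_tree_def by blast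
  show "Bfun M T p f F \<le> ennreal F"
    unfolding Bfun_def
  proof (rule Sup_least, clarify)
    fix \<phi> assume "integrable M \<phi>" "\<forall>x\<in>space M. 0 \<le> \<phi> x" "triple_norm M p \<phi> = ennreal F"
    then show "weak_norm M p (maximal_op M T \<phi>) \<le> ennreal F"
      using weak_norm_maximal_op_le[OF tree, of \<phi> p] assms(4) by simp
  qed
  obtain \<phi> where \<phi>: "integrable M \<phi>" "\<forall>x\<in>space M. 0 \<le> \<phi> x" "integral\<^sup>L M \<phi> = f"
    "triple_norm M p \<phi> = ennreal F" "ennreal F \<le> weak_norm M p (maximal_op M T \<phi>)"
    using extremal_function[OF assms(1) tree assms(4-6)] .
  then show "ennreal F \<le> Bfun M T p f F"
    unfolding Bfun_def by (intro order_trans[OF \<phi>(5)] Sup_upper) blast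
qed

end
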